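(* Let $N>2s$, $s\in(0,1)$, $\alpha\in(0,N)$, and let $V,f,g$ satisfy (V), (f), (g) below. Let $m(a):=\inf_{u\in S(a)}J(u)$ and $m_\infty(a):=\inf_{u\in S(a)}J_\infty(u)$. (1) If $\frac{N+\alpha}{N}=q<p<\frac{N+\alpha+2s}{N}$, then $m(a)\le m_\infty(a)$ for every $a>0$. (2) If $\frac{N+\alpha}{N}<q<p=\frac{N+\alpha+2s}{N}$, then $m(a)\le m_\infty(a)$ for every $0<a<a^*:=\left(\frac{p}{C_{\alpha,p}g_{max}^2}\right)^{\frac1{p-1}}$.
   Context: $I_\alpha(x)=A_\alpha|x|^{-(N-\alpha)}$, $A_\alpha=\frac{\Gamma(\frac{N-\alpha}{2})}{\Gamma(\frac{\alpha}{2})\pi^{N/2}2^\alpha}$, is the Riesz potential. $H^s(\mathbb{R}^N)=\{u\in L^2:(-\Delta)^{s/2}u\in L^2\}$, $\|u\|:=\|(-\Delta)^{s/2}u\|_2$, $S(a)=\{u\in H^s(\mathbb{R}^N):\int|u|^2dx=a\}$. (V) $V\in L^\infty(\mathbb{R}^N)$, $V_\infty:=\lim_{|x|\to\infty}V(x)$ exists, $0\le V(x)\le V_\infty$ for all $x$. (f) $f\in L^\infty$, $f_\infty:=\lim_{|x|\to\infty}f(x)$ exists, $0<f_\infty\le f(x)\le f_{max}$ for all $x$ (constant $f_{max}$). (g) $g\in L^\infty$, $g_\infty:=\lim_{|x|\to\infty}g(x)$ exists, $0<g_\infty\le g(x)\le g_{max}$ for all $x$ (constant $g_{max}$). $J(u)=\frac12\|u\|^2+\frac12\int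 V u^2dx-\frac1{2q}\int (I_\alpha*(f|u|^q))f|u|^qdx-\frac1{2p}\int (I_\alpha*(g|u|^p))g|u|^pdx$ and $J_\infty(u)=\frac12\|u\|^2+\frac{V_\infty}2\int u^2dx-\frac{f_\infty^2}{2q}\int (I_\alpha*|u|^q)|u|^qdx-\frac{g_\infty^2}{2p}\int (I_\alpha*|u|^p)|u|^pdx$. $C_{\alpha,p}$ (for $p=\frac{N+2s+\alpha}{N}$) is the optimal constant in $\int(I_\alpha*|u|^p)|u|^p\le C_{\alpha,p}\|u\|^{2}\|u\|_2^{2(p-1)}$ on $H^s(\mathbb{R}^N)$. *)

theory Defs
  imports "HOL-Analysis.Analysis"
begin

text \<open>Normalising constant C(N,s) of the fractional Laplacian (Fourier symbol of
  (-Delta)^s is |xi|^(2s)), so that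
  ||(-Delta)^(s/2) u||_2^2 = C(N,s)/2 * double integral of |u x - u y|^2/|x-y|^(N+2s).\<close>
definition frac_const :: "nat \<Rightarrow> real \<Rightarrow> real" where
  "frac_const N s = s * 4 powr s * Gamma ((real N + 2 * s) / 2) / (pi powr (real N / 2) * Gamma (1 - s))"

definition gagliardo_integrand :: "real \<Rightarrow> ('a::euclidean_space \<Rightarrow> real) \<Rightarrow> 'a \<times> 'a \<Rightarrow> real" where
  "gagliardo_integrand s u = (\<lambda>(x, y). (u x - u y)^2 / norm (x - y) powr (real DIM('a) + 2 * s))"

definition L2 :: "('a::euclidean_space \<Rightarrow> real) set" where
  "L2 = {u. u \<in> borel_measurable lborel \<and> integrable lborel (\<lambda>x. (u x)^2)}"

definition L2norm :: "('a::euclidean_space \<Rightarrow> real) \<Rightarrow> real" where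
  "L2norm u = sqrt (\<integral>x. (u x)^2 \<partial>lborel)"

text \<open>H^s(R^N) = {u in L^2 : (-Delta)^(s/2) u in L^2}\<close>
definition Hs :: "real \<Rightarrow> ('a::euclidean_space \<Rightarrow> real) set" where
  "Hs s = {u \<in> L2. integrable (lborel \<Otimes>\<^sub>M lborel) (gagliardo_integrand s u)}"

definition frac_norm :: "real \<Rightarrow> ('a::euclidean_space \<Rightarrow> real) \<Rightarrow> real" where
  "frac_norm s u = sqrt (frac_const DIM('a) s / 2 *
      (\<integral>z. gagliardo_integrand s u z \<partial>(lborel \<Otimes>\<^sub>M lborel)))"

definition riesz_const :: "nat \<Rightarrow> real \<Rightarrow> real" where
  "riesz_const N \<alpha> = Gamma ((real N - \<alpha>) / 2) / (Gamma (\<alpha> / 2) * pi powr (real N / 2) * 2 powr \<alpha>)"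

definition riesz :: "real \<Rightarrow> 'a::euclidean_space \<Rightarrow> real" where
  "riesz \<alpha> x = riesz_const DIM('a) \<alpha> * norm x powr (- (real DIM('a) - \<alpha>))"

definition choquard :: "real \<Rightarrow> ('a::euclidean_space \<Rightarrow> real) \<Rightarrow> real" where
  "choquard \<alpha> h = (\<integral>x. (\<integral>y. riesz \<alpha> (x - y) * h y \<partial>lborel) * h x \<partial>lborel)"

definition sphere_S :: "real \<Rightarrow> real \<Rightarrow> ('a::euclidean_space \<Rightarrow> real) set" where
  "sphere_S s a = {u \<in> Hs s. (\<integral>x. (u x)^2 \<partial>lborel) = a}"

definition energy_J :: "real \<Rightarrow> real \<Rightarrow> ('a::euclidean_space \<Rightarrow> real) \<Rightarrow> ('a \<Rightarrow> real) \<Rightarrow> ('a \<Rightarrow> real)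
    \<Rightarrow> real \<Rightarrow> real \<Rightarrow> ('a \<Rightarrow> real) \<Rightarrow> real" where
  "energy_J s \<alpha> V f g q p u =
     1/2 * (frac_norm s u)^2 + 1/2 * (\<integral>x. V x * (u x)^2 \<partial>lborel)
     - 1 / (2 * q) * choquard \<alpha> (\<lambda>x. f x * \<bar>u x\<bar> powr q)
     - 1 / (2 * p) * choquard \<alpha> (\<lambda>x. g x * \<bar>u x\<bar> powr p)"

definition energy_J_inf :: "real \<Rightarrow> real \<Rightarrow> real \<Rightarrow> real \<Rightarrow> real
    \<Rightarrow> real \<Rightarrow> real \<Rightarrow> ('a::euclidean_space \<Rightarrow> real) \<Rightarrow> real" where
  "energy_J_inf s \<alpha> Vinf finf ginf q p u =
     1/2 * (frac_norm s u)^2 + Vinf / 2 * (\<integral>x. (u x)^2 \<partial>lborel)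
     - finf^2 / (2 * q) * choquard \<alpha> (\<lambda>x. \<bar>u x\<bar> powr q)
     - ginf^2 / (2 * p) * choquard \<alpha> (\<lambda>x. \<bar>u x\<bar> powr p)"

definition opt_const :: "'a::euclidean_space itself \<Rightarrow> real \<Rightarrow> real \<Rightarrow> real \<Rightarrow> real" where
  "opt_const _ s \<alpha> p = Inf {C. \<forall>u \<in> (Hs s :: ('a \<Rightarrow> real) set).
      choquard \<alpha> (\<lambda>x. \<bar>u x\<bar> powr p) \<le> C * (frac_norm s u)^2 * (L2norm u) powr (2 * (p - 1))}"

end

theory Submission
  imports Defs
begin

(* Since V <= V_inf, f >= f_inf, g >= g_inf and the Riesz kernel is nonnegative, every term
   of J is dominated by the corresponding term of J_inf, so J u <= J_inf u for every u.
   Taking infima over S(a) gives m(a) <= m_inf(a) for every a, in both exponent regimes. *)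

lemma integrable_iff_between_multiples:
  fixes F G :: "'b \<Rightarrow> real"
  assumes F_meas: "F \<in> borel_measurable M" and G_meas: "G \<in> borel_measurable M"
    and "0 < c" and G_nonneg: "\<And>x. 0 \<le> G x"
    and lower: "\<And>x. c * G x \<le> F x" and upper: "\<And>x. F x \<le> D * G x"
  shows "integrable M F \<longleftrightarrow> integrable M G"
proof
  assume "integrable M F"
  then have "integrable M (\<lambda>x. F x / c)" by simp
  moreover have "norm (G x) \<le> norm (F x / c)" for x
    using lower[of x] G_nonneg[of x] \<open>0 < c\<close> by (simp add: field_simps)
  ultimately show "integrable M G"
    using Bochner_Integration.integrable_bound[OF _ G_meas] by blast
next
  assume "integrable M G"
  then have "integrable M (\<lambda>x. D * G x)" by simp
  moreover have "norm (F x) \<le> norm (D * G x)" for x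
    using lower[of x] upper[of x] G_nonneg[of x] \<open>0 < c\<close>
    by (smt (verit) mult_nonneg_nonneg real_norm_def)
  ultimately show "integrable M F"
    using Bochner_Integration.integrable_bound[OF _ F_meas] by blast
qed

lemma integral_between_multiples:
  fixes F G :: "'b \<Rightarrow> real"
  assumes "F \<in> borel_measurable M" "G \<in> borel_measurable M"
    and "0 < c" "\<And>x. 0 \<le> G x" "\<And>x. c * G x \<le> F x" "\<And>x. F x \<le> D * G x"
  shows "c * integral\<^sup>L M G \<le> integral\<^sup>L M F" and "integral\<^sup>L M F \<le> D * integral\<^sup>L M G"
proof -
  have iff: "integrable M F \<longleftrightarrow> integrable M G"
    using assms by (rule integrable_iff_between_multiples)
  have "c * integral\<^sup>L M G \<le> integral\<^sup>L M F \<and> integral\<^sup>L M F \<le> D * integral\<^sup>L M G"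
  proof (cases "integrable M G")
    case True
    then have "integral\<^sup>L M (\<lambda>x. c * G x) \<le> integral\<^sup>L M F"
      and "integral\<^sup>L M F \<le> integral\<^sup>L M (\<lambda>x. D * G x)"
      using iff assms by (intro integral_mono; simp)+
    then show ?thesis by simp
  next
    case False
    then show ?thesis using iff by (simp add: not_integrable_integral_eq)
  qed
  then show "c * integral\<^sup>L M G \<le> integral\<^sup>L M F" and "integral\<^sup>L M F \<le> D * integral\<^sup>L M G"
    by auto
qed

text \<open>The upper bound D is needed even for this lower bound: it makes the weighted form
  integrable whenever the unweighted one is, whereas a non-integrable function has integral 0.\<close>

lemma convolution_form_weight_lower_bound:
  fixes K h w :: "'a::euclidean_space \<Rightarrow> real"
  assumes K_meas: "K \<in> borel_measurable borel" and K_nonneg: "\<And>z. 0 \<le> K z"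
    and h_meas: "h \<in> borel_measurable lborel" and w_meas: "w \<in> borel_measurable lborel"
    and h_nonneg: "\<And>x. 0 \<le> h x" and "0 < c" and w_bounds: "\<And>x. c \<le> w x \<and> w x \<le> D"
  shows "c\<^sup>2 * (\<integral>x. (\<integral>y. K (x - y) * h y \<partial>lborel) * h x \<partial>lborel)
    \<le> (\<integral>x. (\<integral>y. K (x - y) * (w y * h y) \<partial>lborel) * (w x * h x) \<partial>lborel)"
proof -
  have K_diff_meas: "(\<lambda>(x, y). K (x - y)) \<in> borel_measurable (lborel \<Otimes>\<^sub>M lborel)"
    using measurable_compose[OF _ K_meas, of "\<lambda>(x, y). x - y"] by (simp add: case_prod_beta')
  define P where "P x = (\<integral>y. K (x - y) * h y \<partial>lborel)" for x
  define Pw where "Pw x = (\<integral>y. K (x - y) * (w y * h y) \<partial>lborel)" for x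
  have P_meas: "P \<in> borel_measurable lborel" and Pw_meas: "Pw \<in> borel_measurable lborel"
    unfolding P_def Pw_def using K_diff_meas h_meas w_meas by measurable
  have P_nonneg: "0 \<le> P x" for x
    unfolding P_def using K_nonneg h_nonneg by (intro integral_nonneg_AE) auto
  have weight_between: "c * a \<le> w y * a \<and> w y * a \<le> D * a" if "0 \<le> a" for a y
    using w_bounds[of y] that by (auto intro: mult_right_mono)
  have potential_bounds: "c * P x \<le> Pw x" "Pw x \<le> D * P x" for x
  proof -
    have "c * (K (x - y) * h y) \<le> K (x - y) * (w y * h y)
        \<and> K (x - y) * (w y * h y) \<le> D * (K (x - y) * h y)" for y
      using weight_between[OF mult_nonneg_nonneg[OF K_nonneg h_nonneg], of "x - y" y y]
      by (simp add: mult.left_commute)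
    then show "c * P x \<le> Pw x" "Pw x \<le> D * P x"
      unfolding P_def Pw_def using K_meas h_meas w_meas \<open>0 < c\<close> K_nonneg h_nonneg
      by (intro integral_between_multiples[where D = D]; (blast | simp))+
  qed
  have "c\<^sup>2 * (\<integral>x. P x * h x \<partial>lborel) \<le> (\<integral>x. Pw x * (w x * h x) \<partial>lborel)"
  proof (rule integral_between_multiples(1))
    fix x
    have "0 \<le> c * P x" "0 \<le> c * h x"
      using P_nonneg h_nonneg \<open>0 < c\<close> by simp_all
    moreover have "c * h x \<le> w x * h x" "w x * h x \<le> D * h x"
      using weight_between h_nonneg by auto
    moreover note potential_bounds[of x]
    ultimately have "(c * P x) * (c * h x) \<le> Pw x * (w x * h x)"
      "Pw x * (w x * h x) \<le> (D * P x) * (D * h x)"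
      by (meson mult_mono order_trans)+
    then show "c\<^sup>2 * (P x * h x) \<le> Pw x * (w x * h x)"
      and "Pw x * (w x * h x) \<le> D\<^sup>2 * (P x * h x)"
      by (simp_all add: power2_eq_square ac_simps)
  qed (use P_meas Pw_meas h_meas w_meas P_nonneg h_nonneg \<open>0 < c\<close> in auto)
  then show ?thesis unfolding P_def Pw_def .
qed

lemma riesz_nonneg:
  assumes "0 < \<alpha>" "\<alpha> < real DIM('a)"
  shows "0 \<le> riesz \<alpha> (x::'a::euclidean_space)"
  using assms unfolding riesz_def riesz_const_def by (auto intro!: mult_nonneg_nonneg divide_nonneg_pos)

lemma riesz_measurable: "riesz \<alpha> \<in> (borel_measurable borel :: ('a::euclidean_space \<Rightarrow> real) set)"
  unfolding riesz_def by measurable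

lemma choquard_weight_lower_bound:
  fixes h w :: "'a::euclidean_space \<Rightarrow> real"
  assumes "0 < \<alpha>" "\<alpha> < real DIM('a)"
    and "h \<in> borel_measurable lborel" "w \<in> borel_measurable lborel"
    and "\<And>x. 0 \<le> h x" "0 < c" "\<And>x. c \<le> w x \<and> w x \<le> D"
  shows "c\<^sup>2 * choquard \<alpha> h \<le> choquard \<alpha> (\<lambda>x. w x * h x)"
  unfolding choquard_def
  using assms riesz_measurable riesz_nonneg
  by (intro convolution_form_weight_lower_bound) auto

lemma energy_J_le_energy_J_inf:
  fixes V f g u :: "'a::euclidean_space \<Rightarrow> real"
  assumes "0 < \<alpha>" "\<alpha> < real DIM('a)" "0 < q" "0 < p"
    and V_meas: "V \<in> borel_measurable lborel" and V_bd: "\<forall>x. 0 \<le> V x \<and> V x \<le> Vinf"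
    and f_meas: "f \<in> borel_measurable lborel" and f_bd: "0 < finf" "\<forall>x. finf \<le> f x \<and> f x \<le> fmax"
    and g_meas: "g \<in> borel_measurable lborel" and g_bd: "0 < ginf" "\<forall>x. ginf \<le> g x \<and> g x \<le> gmax"
    and u: "u \<in> L2"
  shows "energy_J s \<alpha> V f g q p u \<le> energy_J_inf s \<alpha> Vinf finf ginf q p u"
proof -
  have u_meas: "u \<in> borel_measurable lborel" and u_sq: "integrable lborel (\<lambda>x. (u x)\<^sup>2)"
    using u unfolding L2_def by auto
  have "0 \<le> Vinf"
    using V_bd by (meson order_trans)
  then have "(\<integral>x. V x * (u x)\<^sup>2 \<partial>lborel) \<le> (\<integral>x. Vinf * (u x)\<^sup>2 \<partial>lborel)"
    using u_sq V_bd by (intro integral_mono') (auto intro: mult_right_mono)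
  then have V_term: "(\<integral>x. V x * (u x)\<^sup>2 \<partial>lborel) \<le> Vinf * (\<integral>x. (u x)\<^sup>2 \<partial>lborel)"
    by simp
  have "finf\<^sup>2 * choquard \<alpha> (\<lambda>x. \<bar>u x\<bar> powr q) \<le> choquard \<alpha> (\<lambda>x. f x * \<bar>u x\<bar> powr q)"
    using assms(1,2) f_meas f_bd u_meas by (intro choquard_weight_lower_bound[where D = fmax]) auto
  then have f_term: "finf\<^sup>2 / (2 * q) * choquard \<alpha> (\<lambda>x. \<bar>u x\<bar> powr q)
      \<le> 1 / (2 * q) * choquard \<alpha> (\<lambda>x. f x * \<bar>u x\<bar> powr q)"
    using \<open>0 < q\<close> by (simp add: divide_right_mono)
  have "ginf\<^sup>2 * choquard \<alpha> (\<lambda>x. \<bar>u x\<bar> powr p) \<le> choquard \<alpha> (\<lambda>x. g x * \<bar>u x\<bar> powr p)"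
    using assms(1,2) g_meas g_bd u_meas by (intro choquard_weight_lower_bound[where D = gmax]) auto
  then have g_term: "ginf\<^sup>2 / (2 * p) * choquard \<alpha> (\<lambda>x. \<bar>u x\<bar> powr p)
      \<le> 1 / (2 * p) * choquard \<alpha> (\<lambda>x. g x * \<bar>u x\<bar> powr p)"
    using \<open>0 < p\<close> by (simp add: divide_right_mono)
  show ?thesis
    unfolding energy_J_def energy_J_inf_def using V_term f_term g_term by simp
qed

theorem lemma2p5:
  fixes V f g :: "'a::euclidean_space \<Rightarrow> real"
    and s \<alpha> p q Vinf finf ginf fmax gmax :: real
  assumes "0 < s" and "s < 1" and "2 * s < real DIM('a)"
    and "0 < \<alpha>" and "\<alpha> < real DIM('a)"
    and V_meas: "V \<in> borel_measurable lborel" and V_lim: "(V \<longlongrightarrow> Vinf) at_infinity"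
    and V_bd: "\<forall>x. 0 \<le> V x \<and> V x \<le> Vinf"
    and f_meas: "f \<in> borel_measurable lborel" and f_lim: "(f \<longlongrightarrow> finf) at_infinity"
    and f_bd: "0 < finf" "\<forall>x. finf \<le> f x \<and> f x \<le> fmax"
    and g_meas: "g \<in> borel_measurable lborel" and g_lim: "(g \<longlongrightarrow> ginf) at_infinity"
    and g_bd: "0 < ginf" "\<forall>x. ginf \<le> g x \<and> g x \<le> gmax"
  shows
    "(q = (real DIM('a) + \<alpha>) / real DIM('a) \<and> q < p \<and> p < (real DIM('a) + \<alpha> + 2 * s) / real DIM('a)
       \<longrightarrow> (\<forall>a > 0.
             (INF u \<in> (sphere_S s a :: ('a \<Rightarrow> real) set). ereal (energy_J s \<alpha> V f g q p u))
           \<le> (INF u \<in> (sphere_S s a :: ('a \<Rightarrow> real) set). ereal (energy_J_inf s \<alpha> Vinf finf ginf q p u))))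
     \<and> ((real DIM('a) + \<alpha>) / real DIM('a) < q \<and> q < p \<and> p = (real DIM('a) + \<alpha> + 2 * s) / real DIM('a)
       \<longrightarrow> (\<forall>a. 0 < a \<and> a < (p / (opt_const TYPE('a) s \<alpha> p * gmax^2)) powr (1 / (p - 1)) \<longrightarrow>
             (INF u \<in> (sphere_S s a :: ('a \<Rightarrow> real) set). ereal (energy_J s \<alpha> V f g q p u))
           \<le> (INF u \<in> (sphere_S s a :: ('a \<Rightarrow> real) set). ereal (energy_J_inf s \<alpha> Vinf finf ginf q p u))))"
proof -
  have infima_le: "(INF u \<in> (sphere_S s a :: ('a \<Rightarrow> real) set). ereal (energy_J s \<alpha> V f g q p u))
      \<le> (INF u \<in> (sphere_S s a :: ('a \<Rightarrow> real) set). ereal (energy_J_inf s \<alpha> Vinf finf ginf q p u))"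
    if "0 < q" "q < p" for a
  proof (rule INF_superset_mono)
    fix u :: "'a \<Rightarrow> real"
    assume "u \<in> sphere_S s a"
    then have "u \<in> L2"
      unfolding sphere_S_def Hs_def by simp
    with that show "ereal (energy_J s \<alpha> V f g q p u) \<le> ereal (energy_J_inf s \<alpha> Vinf finf ginf q p u)"
      using energy_J_le_energy_J_inf[OF \<open>0 < \<alpha>\<close> \<open>\<alpha> < real DIM('a)\<close> \<open>0 < q\<close> _
          V_meas V_bd f_meas f_bd g_meas g_bd]
      by simp
  qed simp
  have "0 < (real DIM('a) + \<alpha>) / real DIM('a)"
    using \<open>0 < \<alpha>\<close> by simp
  with infima_le show ?thesis by auto
qed

end
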